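(* Let $G$ and $H$ be finite simple graphs, and let $x$ be a vertex of $G$ and $y$ a vertex of $H$. Then the curvature of the strong product at the vertex $(x,y)$ is the product of the curvatures: $$K_{G*H}(x,y)=K_G(x)\,K_H(y).$$
   Context: All graphs are finite simple graphs. A complete subgraph with $k+1$ vertices has dimension $k$; $f_k(G)$ denotes the number of complete subgraphs of $G$ of dimension $k$, and the simplex generating function is $f_G(t)=1+f_0(G)t+f_1(G)t^2+\cdots+f_d(G)t^{d+1}$ (for the empty graph $f_G(t)=1$). For a vertex $x$ of $G$, the unit sphere $S(x)$ is the subgraph of $G$ induced on the set of vertices adjacent to $x$. The curvature of $G$ at $x$ is $K_G(x)=\int_{-1}^0 f_{S(x)}(s)\,ds = 1-\frac{f_0(S(x))}{2}+\frac{f_1(S(x))}{3}-\frac{f_2(S(x))}{4}+\cdots$. The strong product $G*H$ has vertex set $V(G)\times V(H)$, and two distinct vertices $(a,b),(c,d)$ are adjacent iff ($a=c$ or $a$ is adjacent to $c$ in $G$) and ($b=d$ or $b$ is adjacent to $d$ in $H$). *)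

theory Defs
  imports "HOL-Analysis.Analysis"
begin

definition simple_graph :: "'a set \<Rightarrow> ('a \<Rightarrow> 'a \<Rightarrow> bool) \<Rightarrow> bool" where
  "simple_graph V E \<longleftrightarrow> finite V \<and>
     (\<forall>u v. E u v \<longrightarrow> u \<in> V \<and> v \<in> V \<and> u \<noteq> v \<and> E v u)"

definition cliques :: "'a set \<Rightarrow> ('a \<Rightarrow> 'a \<Rightarrow> bool) \<Rightarrow> 'a set set" where
  "cliques V E = {A. A \<subseteq> V \<and> (\<forall>u\<in>A. \<forall>v\<in>A. u \<noteq> v \<longrightarrow> E u v)}"

definition fnum :: "'a set \<Rightarrow> ('a \<Rightarrow> 'a \<Rightarrow> bool) \<Rightarrow> nat \<Rightarrow> nat" where
  "fnum V E k = card {A \<in> cliques V E. card A = k + 1}"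

definition simplex_gf :: "'a set \<Rightarrow> ('a \<Rightarrow> 'a \<Rightarrow> bool) \<Rightarrow> real \<Rightarrow> real" where
  "simplex_gf V E t = 1 + (\<Sum>k<card V. real (fnum V E k) * t ^ (k + 1))"

definition sphere_V :: "'a set \<Rightarrow> ('a \<Rightarrow> 'a \<Rightarrow> bool) \<Rightarrow> 'a \<Rightarrow> 'a set" where
  "sphere_V V E x = {v \<in> V. E x v}"

definition sphere_E :: "'a set \<Rightarrow> ('a \<Rightarrow> 'a \<Rightarrow> bool) \<Rightarrow> 'a \<Rightarrow> 'a \<Rightarrow> 'a \<Rightarrow> bool" where
  "sphere_E V E x u v \<longleftrightarrow> E u v \<and> u \<in> sphere_V V E x \<and> v \<in> sphere_V V E x"

definition curvature :: "'a set \<Rightarrow> ('a \<Rightarrow> 'a \<Rightarrow> bool) \<Rightarrow> 'a \<Rightarrow> real" where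
  "curvature V E x = integral {-1..0} (simplex_gf (sphere_V V E x) (sphere_E V E x))"

definition strong_V :: "'a set \<Rightarrow> 'b set \<Rightarrow> ('a \<times> 'b) set" where
  "strong_V V W = V \<times> W"

definition strong_E :: "'a set \<Rightarrow> ('a \<Rightarrow> 'a \<Rightarrow> bool) \<Rightarrow> 'b set \<Rightarrow> ('b \<Rightarrow> 'b \<Rightarrow> bool)
    \<Rightarrow> 'a \<times> 'b \<Rightarrow> 'a \<times> 'b \<Rightarrow> bool" where
  "strong_E V E W F p q \<longleftrightarrow> p \<in> V \<times> W \<and> q \<in> V \<times> W \<and> p \<noteq> q \<and>
     (fst p = fst q \<or> E (fst p) (fst q)) \<and> (snd p = snd q \<or> F (snd p) (snd q))"

end

theory Submission
  imports Defs
begin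

(* The simplex generating function of S(x) is the sum of t^|A| over the cliques A of S(x), so the
   curvature is the sum of the weights w(|A|) = integral of t^|A| over [-1,0] = (-1)^|A| / (|A| + 1).
   A clique of the unit sphere of (x,y) in G*H is a subset A of B(x) x B(y) - {(x,y)}, B the unit ball,
   whose projections with x resp. y removed are cliques X of S(x) and Y of S(y). Grouping by (X,Y),
   it suffices that the weights of all A with these projections sum to w(|X|) w(|Y|). Inclusion-exclusion
   over the elements of X and Y missed by the projections turns this sum into an alternating sum of
   sums over all subsets of smaller punctured boxes; over all subsets of an n-set the weights sum to
   the integral of (1+t)^n, i.e. 1/(n+1), and for a punctured box n+1 = (|X'|+1)(|Y'|+1) factors. *)

lemma image_minus_singleton_eq_iff: "x \<notin> X \<Longrightarrow> f ` A - {x} = X \<longleftrightarrow> f ` A \<subseteq> insert x X \<and> X \<subseteq> f ` A"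
  by blast

lemma subset_product_iff: "A \<subseteq> P \<times> Q \<longleftrightarrow> fst ` A \<subseteq> P \<and> snd ` A \<subseteq> Q"
  by fastforce

lemma has_integral_power_shift:
  fixes a b c :: real
  assumes "a \<le> b"
  shows "((\<lambda>t. (t + c) ^ n) has_integral (((b + c) ^ Suc n - (a + c) ^ Suc n) / Suc n)) {a..b}"
proof -
  have "((\<lambda>t. (t + c) ^ Suc n / Suc n) has_real_derivative (t + c) ^ n) (at t within {a..b})" for t
    by (rule derivative_eq_intros refl | simp)+
  then show ?thesis
    using fundamental_theorem_of_calculus[OF assms, of "\<lambda>t. (t + c) ^ Suc n / Suc n"]
    by (simp add: has_real_derivative_iff_has_vector_derivative diff_divide_distrib)
qed

definition curvature_weight :: "nat \<Rightarrow> real" where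
  "curvature_weight k = (-1) ^ k / (k + 1)"

lemma has_integral_power_curvature_weight:
  "((\<lambda>t::real. t ^ k) has_integral curvature_weight k) {-1..0}"
  using has_integral_power_shift[of "-1" 0 0 k] by (simp add: curvature_weight_def add.commute)

lemma sum_Pow_power:
  fixes t :: "'c::comm_semiring_1"
  assumes "finite Z"
  shows "(\<Sum>A\<in>Pow Z. t ^ card A) = (t + 1) ^ card Z"
  using prod_add[OF assms, of "\<lambda>_. t" "\<lambda>_. 1"] by simp

lemma sum_Pow_minus_one_power:
  assumes "finite S"
  shows "(\<Sum>D\<in>Pow S. (-1) ^ card D) = (if S = {} then 1 else (0::'c::comm_ring_1))"
  using sum_Pow_power[OF assms, of "-1 :: 'c"] assms by (auto simp: card_eq_0_iff power_0_left)

lemma sum_Pow_curvature_weight: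
  assumes "finite Z"
  shows "(\<Sum>A\<in>Pow Z. curvature_weight (card A)) = 1 / (card Z + 1)"
proof -
  have "((\<lambda>t. \<Sum>A\<in>Pow Z. t ^ card A) has_integral (\<Sum>A\<in>Pow Z. curvature_weight (card A))) {-1..0}"
    using assms by (intro has_integral_sum has_integral_power_curvature_weight) auto
  moreover have "((\<lambda>t. \<Sum>A\<in>Pow Z. t ^ card A) has_integral (1 / (card Z + 1))) {-1..0}"
    using has_integral_power_shift[of "-1" 0 1 "card Z"] by (simp add: sum_Pow_power[OF assms] add.commute)
  ultimately show ?thesis
    using has_integral_unique by blast
qed

lemma sum_Pow_alternating_complement:
  assumes "finite X"
  shows "(\<Sum>D\<in>Pow X. (-1) ^ card D / (card (X - D) + 1)) = curvature_weight (card X)"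
proof -
  have "(\<Sum>D\<in>Pow X. (-1) ^ card D / (card (X - D) + 1))
      = (\<Sum>C\<in>Pow X. (-1) ^ card (X - C) / (card C + 1) :: real)"
    by (rule sum.reindex_bij_witness[of _ "\<lambda>D. X - D" "\<lambda>D. X - D"]) (auto simp: double_diff)
  also have "\<dots> = (\<Sum>C\<in>Pow X. (-1) ^ card X * curvature_weight (card C))"
  proof (rule sum.cong[OF refl])
    fix C assume "C \<in> Pow X"
    then have "(-1 :: real) ^ card (X - C) = (-1) ^ card X * (-1) ^ card C"
      using assms by (simp add: card_Diff_subset finite_subset card_mono neg_one_power_add_eq_neg_one_power_diff
          flip: power_add)
    then show "(-1) ^ card (X - C) / (card C + 1) = (-1) ^ card X * curvature_weight (card C)"
      by (simp add: curvature_weight_def)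
  qed
  also have "\<dots> = (-1) ^ card X * (\<Sum>C\<in>Pow X. curvature_weight (card C))"
    by (rule sum_distrib_left[symmetric])
  also have "\<dots> = curvature_weight (card X)"
    unfolding sum_Pow_curvature_weight[OF assms] by (simp add: curvature_weight_def)
  finally show ?thesis .
qed

lemma sum_Pow_image_covering:
  fixes \<phi> :: "'a set \<Rightarrow> 'c::comm_ring_1"
  assumes "finite U" and "finite X"
  shows "(\<Sum>A\<in>Pow U. if X \<subseteq> f ` A then \<phi> A else 0)
       = (\<Sum>D\<in>Pow X. (-1) ^ card D * (\<Sum>A\<in>Pow {u\<in>U. f u \<notin> D}. \<phi> A))"
proof -
  have "(\<Sum>A\<in>Pow U. if X \<subseteq> f ` A then \<phi> A else 0)
      = (\<Sum>A\<in>Pow U. (\<Sum>D\<in>Pow (X - f ` A). (-1) ^ card D) * \<phi> A)"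
    using assms(2) by (intro sum.cong) (auto simp: sum_Pow_minus_one_power)
  also have "\<dots> = (\<Sum>A\<in>Pow U. \<Sum>D\<in>Pow X. if D \<inter> f ` A = {} then (-1) ^ card D * \<phi> A else 0)"
  proof (rule sum.cong[OF refl])
    fix A
    have "{D \<in> Pow X. D \<inter> f ` A = {}} = Pow (X - f ` A)"
      by auto
    then show "(\<Sum>D\<in>Pow (X - f ` A). (-1) ^ card D) * \<phi> A
        = (\<Sum>D\<in>Pow X. if D \<inter> f ` A = {} then (-1) ^ card D * \<phi> A else 0)"
      using assms(2) by (simp add: sum.inter_filter[symmetric] sum_distrib_right)
  qed
  also have "\<dots> = (\<Sum>D\<in>Pow X. \<Sum>A\<in>Pow U. if D \<inter> f ` A = {} then (-1) ^ card D * \<phi> A else 0)"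
    by (rule sum.swap)
  also have "\<dots> = (\<Sum>D\<in>Pow X. (-1) ^ card D * (\<Sum>A\<in>Pow {u\<in>U. f u \<notin> D}. \<phi> A))"
  proof (rule sum.cong[OF refl])
    fix D
    have "{A \<in> Pow U. D \<inter> f ` A = {}} = Pow {u\<in>U. f u \<notin> D}"
      by auto
    then show "(\<Sum>A\<in>Pow U. if D \<inter> f ` A = {} then (-1) ^ card D * \<phi> A else 0)
        = (-1) ^ card D * (\<Sum>A\<in>Pow {u\<in>U. f u \<notin> D}. \<phi> A)"
      using assms(1) by (simp add: sum.inter_filter[symmetric] sum_distrib_left)
  qed
  finally show ?thesis .
qed

lemma card_punctured_product:
  assumes "finite X" and "finite Y" and "x \<notin> X" and "y \<notin> Y"
  shows "card (insert x X \<times> insert y Y - {(x, y)}) + 1 = (card X + 1) * (card Y + 1)"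
proof -
  have "card (insert x X \<times> insert y Y) = (card X + 1) * (card Y + 1)"
    unfolding card_cartesian_product using assms by simp
  then show ?thesis
    by (simp only: card_Diff_singleton[of "(x, y)"] mem_Sigma_iff insertI1 conj_absorb) simp
qed

lemma sum_curvature_weight_punctured_product:
  assumes "finite X" and "finite Y" and "x \<notin> X" and "y \<notin> Y"
  shows "(\<Sum>A | A \<subseteq> insert x X \<times> insert y Y - {(x, y)} \<and> X \<subseteq> fst ` A \<and> Y \<subseteq> snd ` A.
            curvature_weight (card A))
       = curvature_weight (card X) * curvature_weight (card Y)"
proof -
  define U where "U = insert x X \<times> insert y Y - {(x, y)}"
  \<comment> \<open>The condition on the second projection is kept inside \<open>w\<close>, so that inclusion-exclusion
      can be applied to one coordinate at a time.\<close>
  define w where "w A = (if Y \<subseteq> snd ` A then curvature_weight (card A) else 0)" for A :: "('a \<times> 'b) set"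
  have fin_U: "finite U"
    unfolding U_def using assms(1,2) by simp
  have inner: "(\<Sum>A\<in>Pow {u \<in> U. fst u \<notin> D1}. w A) = curvature_weight (card Y) / (card (X - D1) + 1)"
    if "D1 \<subseteq> X" for D1
  proof -
    have box_sum: "(\<Sum>A\<in>Pow {u \<in> U. fst u \<notin> D1 \<and> snd u \<notin> D2}. curvature_weight (card A))
        = 1 / (card (X - D1) + 1) * (1 / (card (Y - D2) + 1))" if "D2 \<subseteq> Y" for D2
    proof -
      let ?Z = "insert x (X - D1) \<times> insert y (Y - D2) - {(x, y)}"
      have "{u \<in> U. fst u \<notin> D1 \<and> snd u \<notin> D2} = ?Z"
        using \<open>D1 \<subseteq> X\<close> that assms(3,4) unfolding U_def by auto
      moreover have "card ?Z + 1 = (card (X - D1) + 1) * (card (Y - D2) + 1)"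
        using assms by (intro card_punctured_product) auto
      moreover have "finite ?Z"
        using assms(1,2) by simp
      ultimately show ?thesis
        by (simp only: sum_Pow_curvature_weight) (simp add: algebra_simps)
    qed
    have "(\<Sum>A\<in>Pow {u \<in> U. fst u \<notin> D1}. w A)
        = (\<Sum>D2\<in>Pow Y. (-1) ^ card D2 *
             (\<Sum>A\<in>Pow {u \<in> {u \<in> U. fst u \<notin> D1}. snd u \<notin> D2}. curvature_weight (card A)))"
      unfolding w_def using fin_U assms(2) by (intro sum_Pow_image_covering) auto
    also have "\<dots> = (\<Sum>D2\<in>Pow Y. (-1) ^ card D2 / (card (Y - D2) + 1)) / (card (X - D1) + 1)"
      using box_sum by (simp add: sum_divide_distrib ac_simps)
    also have "\<dots> = curvature_weight (card Y) / (card (X - D1) + 1)"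
      using assms(2) by (simp only: sum_Pow_alternating_complement)
    finally show ?thesis .
  qed
  have "{A. A \<subseteq> U \<and> X \<subseteq> fst ` A \<and> Y \<subseteq> snd ` A} = {A \<in> Pow U. X \<subseteq> fst ` A \<and> Y \<subseteq> snd ` A}"
    by blast
  then have "(\<Sum>A | A \<subseteq> U \<and> X \<subseteq> fst ` A \<and> Y \<subseteq> snd ` A. curvature_weight (card A))
      = (\<Sum>A\<in>Pow U. if X \<subseteq> fst ` A then w A else 0)"
    using fin_U by (simp only: sum.inter_filter finite_Pow_iff) (auto simp: w_def intro: sum.cong)
  also have "\<dots> = (\<Sum>D1\<in>Pow X. (-1) ^ card D1 * (\<Sum>A\<in>Pow {u \<in> U. fst u \<notin> D1}. w A))"
    using fin_U assms(1) by (rule sum_Pow_image_covering)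
  also have "\<dots> = (\<Sum>D1\<in>Pow X. (-1) ^ card D1 / (card (X - D1) + 1)) * curvature_weight (card Y)"
    by (simp add: inner sum_distrib_right)
  also have "\<dots> = curvature_weight (card X) * curvature_weight (card Y)"
    using assms(1) by (simp only: sum_Pow_alternating_complement)
  finally show ?thesis
    unfolding U_def .
qed

lemma cliques_subset: "A \<in> cliques V E \<Longrightarrow> A \<subseteq> V"
  by (simp add: cliques_def)

lemma finite_cliques: "finite V \<Longrightarrow> finite (cliques V E)"
  unfolding cliques_def by (rule finite_subset[of _ "Pow V"]) auto

lemma simplex_gf_eq_sum_cliques:
  assumes "finite V"
  shows "simplex_gf V E t = (\<Sum>A\<in>cliques V E. t ^ card A)"
proof -
  let ?C = "cliques V E"
  have card_le: "card A < Suc (card V)" if "A \<in> ?C" for A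
    using that assms unfolding cliques_def by (auto intro: card_mono simp: less_Suc_eq_le)
  have empty: "{A \<in> ?C. card A = 0} = {{}}"
    using assms by (auto simp: cliques_def card_eq_0_iff dest: finite_subset)
  have "(\<Sum>A\<in>?C. t ^ card A) = (\<Sum>k<Suc (card V). \<Sum>A\<in>{A \<in> ?C. card A = k}. t ^ card A)"
    using card_le assms by (intro sum.group[symmetric] finite_cliques) auto
  also have "\<dots> = (\<Sum>k<Suc (card V). real (card {A \<in> ?C. card A = k}) * t ^ k)"
    by simp
  also have "\<dots> = simplex_gf V E t"
    unfolding sum.lessThan_Suc_shift simplex_gf_def fnum_def empty by simp
  finally show ?thesis ..
qed

lemma finite_sphere_V: "simple_graph V E \<Longrightarrow> finite (sphere_V V E x)"
  unfolding simple_graph_def sphere_V_def by simp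

lemma not_mem_sphere_V: "simple_graph V E \<Longrightarrow> x \<notin> sphere_V V E x"
  unfolding simple_graph_def sphere_V_def by blast

lemma curvature_eq_sum_cliques:
  assumes "finite (sphere_V V E x)"
  shows "curvature V E x = (\<Sum>A\<in>cliques (sphere_V V E x) (sphere_E V E x). curvature_weight (card A))"
proof -
  let ?C = "cliques (sphere_V V E x) (sphere_E V E x)"
  have "finite ?C"
    using assms by (rule finite_cliques)
  then have "((\<lambda>t. \<Sum>A\<in>?C. t ^ card A) has_integral (\<Sum>A\<in>?C. curvature_weight (card A))) {-1..0}"
    by (intro has_integral_sum has_integral_power_curvature_weight)
  then show ?thesis
    unfolding curvature_def simplex_gf_eq_sum_cliques[OF assms] by (rule integral_unique)
qed

lemma cliques_sphere: "cliques (sphere_V V E x) (sphere_E V E x) = {A \<in> cliques V E. A \<subseteq> sphere_V V E x}"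
  unfolding cliques_def sphere_E_def by (auto simp: sphere_V_def)

lemma clique_in_ball_iff:
  assumes "simple_graph V E" and "x \<in> V" and "C \<subseteq> insert x (sphere_V V E x)"
  shows "C \<in> cliques V E \<longleftrightarrow> C - {x} \<in> cliques (sphere_V V E x) (sphere_E V E x)"
proof -
  have sym: "E u v \<Longrightarrow> E v u" for u v
    using assms(1) unfolding simple_graph_def by blast
  have centre: "E x v" "E v x" if "v \<in> C - {x}" for v
  proof -
    show "E x v"
      using that assms(3) unfolding sphere_V_def by auto
    then show "E v x"
      by (rule sym)
  qed
  have "C - {x} \<subseteq> sphere_V V E x" "sphere_V V E x \<subseteq> V"
    using assms(3) unfolding sphere_V_def by auto
  then have in_V: "C \<subseteq> V \<longleftrightarrow> C - {x} \<subseteq> V" and in_sphere: "C - {x} \<subseteq> sphere_V V E x"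
    using assms(2) by auto
  have adjacent: "(\<forall>u\<in>C. \<forall>v\<in>C. u \<noteq> v \<longrightarrow> E u v) \<longleftrightarrow> (\<forall>u\<in>C - {x}. \<forall>v\<in>C - {x}. u \<noteq> v \<longrightarrow> E u v)"
  proof (intro iffI ballI impI)
    fix u v
    assume "\<forall>u\<in>C - {x}. \<forall>v\<in>C - {x}. u \<noteq> v \<longrightarrow> E u v" and "u \<in> C" "v \<in> C" "u \<noteq> v"
    then show "E u v"
      using centre by (cases "u = x"; cases "v = x") auto
  qed auto
  show ?thesis
    unfolding cliques_sphere mem_Collect_eq unfolding cliques_def mem_Collect_eq in_V adjacent
    using in_sphere by simp
qed

lemma cliques_strong_product_iff:
  "A \<in> cliques (strong_V V W) (strong_E V E W F) \<longleftrightarrow> fst ` A \<in> cliques V E \<and> snd ` A \<in> cliques W F"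
  unfolding cliques_def strong_V_def strong_E_def by (auto 0 3 simp: subset_iff)

lemma sphere_strong_product:
  assumes "x \<in> V" and "y \<in> W"
  shows "sphere_V (strong_V V W) (strong_E V E W F) (x, y)
       = insert x (sphere_V V E x) \<times> insert y (sphere_V W F y) - {(x, y)}"
  using assms unfolding sphere_V_def strong_V_def strong_E_def by auto

lemma cliques_sphere_strong_product_iff:
  assumes "simple_graph V E" and "simple_graph W F" and "x \<in> V" and "y \<in> W"
  shows "A \<in> cliques (sphere_V (strong_V V W) (strong_E V E W F) (x, y))
                     (sphere_E (strong_V V W) (strong_E V E W F) (x, y))
     \<longleftrightarrow> A \<subseteq> insert x (sphere_V V E x) \<times> insert y (sphere_V W F y) - {(x, y)}
         \<and> fst ` A - {x} \<in> cliques (sphere_V V E x) (sphere_E V E x)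
         \<and> snd ` A - {y} \<in> cliques (sphere_V W F y) (sphere_E W F y)"
proof -
  let ?box = "insert x (sphere_V V E x) \<times> insert y (sphere_V W F y) - {(x, y)}"
  have "A \<in> cliques (sphere_V (strong_V V W) (strong_E V E W F) (x, y))
                   (sphere_E (strong_V V W) (strong_E V E W F) (x, y))
      \<longleftrightarrow> A \<subseteq> ?box \<and> fst ` A \<in> cliques V E \<and> snd ` A \<in> cliques W F"
    unfolding cliques_sphere mem_Collect_eq
    unfolding sphere_strong_product[OF assms(3,4)] cliques_strong_product_iff by blast
  moreover have "fst ` A \<subseteq> insert x (sphere_V V E x)" "snd ` A \<subseteq> insert y (sphere_V W F y)"
    if "A \<subseteq> ?box"
    using that by auto
  ultimately show ?thesis
    using clique_in_ball_iff[OF assms(1,3)] clique_in_ball_iff[OF assms(2,4)] by blast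
qed

lemma strong_sphere_cliques_fibre:
  assumes "simple_graph V E" and "simple_graph W F" and "x \<in> V" and "y \<in> W"
    and "X \<in> cliques (sphere_V V E x) (sphere_E V E x)" and "Y \<in> cliques (sphere_V W F y) (sphere_E W F y)"
  shows "{A \<in> cliques (sphere_V (strong_V V W) (strong_E V E W F) (x, y))
                      (sphere_E (strong_V V W) (strong_E V E W F) (x, y)).
            (fst ` A - {x}, snd ` A - {y}) = (X, Y)}
       = {A. A \<subseteq> insert x X \<times> insert y Y - {(x, y)} \<and> X \<subseteq> fst ` A \<and> Y \<subseteq> snd ` A}"
proof -
  have "X \<subseteq> sphere_V V E x" "Y \<subseteq> sphere_V W F y"
    using assms(5,6) by (simp_all add: cliques_subset)
  then have box: "insert x X \<times> insert y Y \<subseteq> insert x (sphere_V V E x) \<times> insert y (sphere_V W F y)"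
    by (intro Sigma_mono insert_mono)
  have "x \<notin> X" "y \<notin> Y"
    using \<open>X \<subseteq> sphere_V V E x\<close> \<open>Y \<subseteq> sphere_V W F y\<close>
      not_mem_sphere_V[OF assms(1)] not_mem_sphere_V[OF assms(2)] by blast+
  then have projections: "fst ` A - {x} = X \<and> snd ` A - {y} = Y
      \<longleftrightarrow> A \<subseteq> insert x X \<times> insert y Y \<and> X \<subseteq> fst ` A \<and> Y \<subseteq> snd ` A" for A :: "('a \<times> 'b) set"
    by (simp only: image_minus_singleton_eq_iff[OF \<open>x \<notin> X\<close>] image_minus_singleton_eq_iff[OF \<open>y \<notin> Y\<close>]
        subset_product_iff) blast
  show ?thesis
  proof (intro set_eqI iffI)
    fix A
    assume "A \<in> {A \<in> cliques (sphere_V (strong_V V W) (strong_E V E W F) (x, y))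
                      (sphere_E (strong_V V W) (strong_E V E W F) (x, y)).
            (fst ` A - {x}, snd ` A - {y}) = (X, Y)}"
    then have "A \<subseteq> insert x (sphere_V V E x) \<times> insert y (sphere_V W F y) - {(x, y)}"
      and "fst ` A - {x} = X \<and> snd ` A - {y} = Y"
      unfolding mem_Collect_eq cliques_sphere_strong_product_iff[OF assms(1-4)] by simp_all
    then show "A \<in> {A. A \<subseteq> insert x X \<times> insert y Y - {(x, y)} \<and> X \<subseteq> fst ` A \<and> Y \<subseteq> snd ` A}"
      unfolding projections by blast
  next
    fix A
    assume "A \<in> {A. A \<subseteq> insert x X \<times> insert y Y - {(x, y)} \<and> X \<subseteq> fst ` A \<and> Y \<subseteq> snd ` A}"
    then have "A \<subseteq> insert x (sphere_V V E x) \<times> insert y (sphere_V W F y) - {(x, y)}"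
      and "fst ` A - {x} = X \<and> snd ` A - {y} = Y"
      using box unfolding projections by blast+
    then show "A \<in> {A \<in> cliques (sphere_V (strong_V V W) (strong_E V E W F) (x, y))
                      (sphere_E (strong_V V W) (strong_E V E W F) (x, y)).
            (fst ` A - {x}, snd ` A - {y}) = (X, Y)}"
      unfolding mem_Collect_eq cliques_sphere_strong_product_iff[OF assms(1-4)] using assms(5,6) by simp
  qed
qed

lemma sum_curvature_weight_strong_sphere_fibre:
  assumes "simple_graph V E" and "simple_graph W F" and "x \<in> V" and "y \<in> W"
    and "X \<in> cliques (sphere_V V E x) (sphere_E V E x)" and "Y \<in> cliques (sphere_V W F y) (sphere_E W F y)"
  shows "(\<Sum>A\<in>{A \<in> cliques (sphere_V (strong_V V W) (strong_E V E W F) (x, y))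
                            (sphere_E (strong_V V W) (strong_E V E W F) (x, y)).
              (fst ` A - {x}, snd ` A - {y}) = (X, Y)}. curvature_weight (card A))
       = curvature_weight (card X) * curvature_weight (card Y)"
proof -
  have "X \<subseteq> sphere_V V E x" "Y \<subseteq> sphere_V W F y"
    using assms(5,6) by (simp_all add: cliques_subset)
  then have "finite X" "finite Y" "x \<notin> X" "y \<notin> Y"
    using finite_sphere_V[OF assms(1)] finite_sphere_V[OF assms(2)]
      not_mem_sphere_V[OF assms(1)] not_mem_sphere_V[OF assms(2)] by (auto intro: finite_subset)
  then show ?thesis
    unfolding strong_sphere_cliques_fibre[OF assms] by (rule sum_curvature_weight_punctured_product)
qed

theorem theorem1:
  fixes V :: "'a set" and E :: "'a \<Rightarrow> 'a \<Rightarrow> bool"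
    and W :: "'b set" and F :: "'b \<Rightarrow> 'b \<Rightarrow> bool"
  assumes "simple_graph V E" and "simple_graph W F"
    and "x \<in> V" and "y \<in> W"
  shows "curvature (strong_V V W) (strong_E V E W F) (x, y) = curvature V E x * curvature W F y"
proof -
  let ?C1 = "cliques (sphere_V V E x) (sphere_E V E x)"
  let ?C2 = "cliques (sphere_V W F y) (sphere_E W F y)"
  let ?S = "sphere_V (strong_V V W) (strong_E V E W F) (x, y)"
  let ?C = "cliques ?S (sphere_E (strong_V V W) (strong_E V E W F) (x, y))"
  let ?proj = "\<lambda>A. (fst ` A - {x}, snd ` A - {y})"
  have finite_S: "finite ?S"
    unfolding sphere_strong_product[OF assms(3,4)] using assms(1,2) by (simp add: finite_sphere_V)
  have "?proj ` ?C \<subseteq> ?C1 \<times> ?C2"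
    using cliques_sphere_strong_product_iff[OF assms] by auto
  then have "(\<Sum>A\<in>?C. curvature_weight (card A))
      = (\<Sum>XY\<in>?C1 \<times> ?C2. \<Sum>A\<in>{A \<in> ?C. ?proj A = XY}. curvature_weight (card A))"
    using assms(1,2) by (intro sum.group[symmetric] finite_cliques finite_SigmaI finite_S finite_sphere_V)
  also have "\<dots> = (\<Sum>(X, Y)\<in>?C1 \<times> ?C2. curvature_weight (card X) * curvature_weight (card Y))"
  proof (rule sum.cong[OF refl])
    fix XY assume "XY \<in> ?C1 \<times> ?C2"
    then obtain X Y where "XY = (X, Y)" "X \<in> ?C1" "Y \<in> ?C2"
      by blast
    then show "(\<Sum>A\<in>{A \<in> ?C. ?proj A = XY}. curvature_weight (card A))
        = (case XY of (X, Y) \<Rightarrow> curvature_weight (card X) * curvature_weight (card Y))"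
      using sum_curvature_weight_strong_sphere_fibre[OF assms] by simp
  qed
  also have "\<dots> = (\<Sum>X\<in>?C1. curvature_weight (card X)) * (\<Sum>Y\<in>?C2. curvature_weight (card Y))"
    by (simp add: sum_product sum.cartesian_product)
  finally show ?thesis
    using assms(1,2) finite_S by (simp add: curvature_eq_sum_cliques finite_sphere_V)
qed

end
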